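(* On an open set of $\mathbb C^2$, let $\omega=f(x,y)\,dx\wedge dy$ with $f$ a nonvanishing holomorphic function. The Hess connection of the bi-Lagrangian manifold $(\mathbb C^2,\omega,\ker(dx),\ker(dy))$ is flat if and only if $$\frac{\partial^2 f}{\partial x\,\partial y}\cdot f=\frac{\partial f}{\partial x}\cdot\frac{\partial f}{\partial y}.$$
   Context: The Hess connection of a bi-Lagrangian manifold $(M,\omega,\mathcal F_1,\mathcal F_2)$ (holomorphic symplectic $\omega$, transversal Lagrangian foliations) is the unique torsion-free affine connection $\nabla$ with $X\cdot\omega(Y,Z)=\omega(\nabla_XY,Z)+\omega(Y,\nabla_XZ)$ for all vector fields and with $\nabla_XY$ tangent to $\mathcal F_j$ whenever $Y$ is ($j=1,2$). It is flat if its curvature $R(X,Y)Z=\nabla_X\nabla_YZ-\nabla_Y\nabla_XZ-\nabla_{[X,Y]}Z$ vanishes identically. *)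

theory Defs
  imports "HOL-Analysis.Analysis"
begin

type_synonym pt = "complex \<times> complex"

definition comp :: "nat \<Rightarrow> pt \<Rightarrow> complex" where
  "comp i v = (if i = 0 then fst v else snd v)"

text \<open>Holomorphic function on an open subset of C^2: complex Frechet differentiable.\<close>
definition holo2 :: "pt set \<Rightarrow> (pt \<Rightarrow> complex) \<Rightarrow> bool" where
  "holo2 U g \<longleftrightarrow> (\<forall>p\<in>U. \<exists>L. (g has_derivative L) (at p) \<and>
      (\<forall>c v. L (c * fst v, c * snd v) = c * L v))"

text \<open>Holomorphic vector field on U (components w.r.t. d/dx, d/dy).\<close>
definition hvf :: "pt set \<Rightarrow> (pt \<Rightarrow> pt) \<Rightarrow> bool" where
  "hvf U X \<longleftrightarrow> holo2 U (\<lambda>q. fst (X q)) \<and> holo2 U (\<lambda>q. snd (X q))"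

definition pd :: "nat \<Rightarrow> (pt \<Rightarrow> complex) \<Rightarrow> pt \<Rightarrow> complex" where
  "pd i g p = (if i = 0 then deriv (\<lambda>t. g (t, snd p)) (fst p)
               else deriv (\<lambda>t. g (fst p, t)) (snd p))"

definition vd :: "(pt \<Rightarrow> pt) \<Rightarrow> (pt \<Rightarrow> complex) \<Rightarrow> pt \<Rightarrow> complex" where
  "vd X g p = (\<Sum>i<2. comp i (X p) * pd i g p)"

definition bracket :: "(pt \<Rightarrow> pt) \<Rightarrow> (pt \<Rightarrow> pt) \<Rightarrow> pt \<Rightarrow> pt" where
  "bracket X Y p =
     (vd X (\<lambda>q. fst (Y q)) p - vd Y (\<lambda>q. fst (X q)) p,
      vd X (\<lambda>q. snd (Y q)) p - vd Y (\<lambda>q. snd (X q)) p)"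

text \<open>Affine connection on an open subset of C^2, given by its Christoffel symbols
  G k i j (so that nabla_{d_i} d_j = sum_k G k i j d_k).\<close>
type_synonym chr = "nat \<Rightarrow> nat \<Rightarrow> nat \<Rightarrow> pt \<Rightarrow> complex"

definition nabla :: "chr \<Rightarrow> (pt \<Rightarrow> pt) \<Rightarrow> (pt \<Rightarrow> pt) \<Rightarrow> pt \<Rightarrow> pt" where
  "nabla G X Y p =
     (let c = (\<lambda>k. vd X (\<lambda>q. comp k (Y q)) p
                + (\<Sum>i<2. \<Sum>j<2. G k i j p * comp i (X p) * comp j (Y p)))
      in (c 0, c 1))"

definition omega :: "(pt \<Rightarrow> complex) \<Rightarrow> pt \<Rightarrow> pt \<Rightarrow> pt \<Rightarrow> complex" where
  "omega f p u v = f p * (fst u * snd v - snd u * fst v)"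

definition is_hess :: "pt set \<Rightarrow> (pt \<Rightarrow> complex) \<Rightarrow> chr \<Rightarrow> bool" where
  "is_hess U f G \<longleftrightarrow>
     (\<forall>k<2. \<forall>i<2. \<forall>j<2. holo2 U (G k i j)) \<and>
     (\<forall>X Y. hvf U X \<longrightarrow> hvf U Y \<longrightarrow>
        (\<forall>p\<in>U. nabla G X Y p - nabla G Y X p = bracket X Y p)) \<and>
     (\<forall>X Y Z. hvf U X \<longrightarrow> hvf U Y \<longrightarrow> hvf U Z \<longrightarrow>
        (\<forall>p\<in>U. vd X (\<lambda>q. omega f q (Y q) (Z q)) p
                = omega f p (nabla G X Y p) (Z p) + omega f p (Y p) (nabla G X Z p))) \<and>
     (\<forall>X Y. hvf U X \<longrightarrow> hvf U Y \<longrightarrow> (\<forall>p\<in>U. fst (Y p) = 0) \<longrightarrow>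
        (\<forall>p\<in>U. fst (nabla G X Y p) = 0)) \<and>
     (\<forall>X Y. hvf U X \<longrightarrow> hvf U Y \<longrightarrow> (\<forall>p\<in>U. snd (Y p) = 0) \<longrightarrow>
        (\<forall>p\<in>U. snd (nabla G X Y p) = 0))"

definition curv :: "chr \<Rightarrow> (pt \<Rightarrow> pt) \<Rightarrow> (pt \<Rightarrow> pt) \<Rightarrow> (pt \<Rightarrow> pt) \<Rightarrow> pt \<Rightarrow> pt" where
  "curv G X Y Z p = nabla G X (nabla G Y Z) p - nabla G Y (nabla G X Z) p
                    - nabla G (bracket X Y) Z p"

definition flat_conn :: "pt set \<Rightarrow> chr \<Rightarrow> bool" where
  "flat_conn U G \<longleftrightarrow> (\<forall>X Y Z. hvf U X \<longrightarrow> hvf U Y \<longrightarrow> hvf U Z \<longrightarrow>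
      (\<forall>p\<in>U. curv G X Y Z p = 0))"

end

(*
  Both foliations being by coordinate lines, the Hess connection of f dx \<and> dy has as its
  only nonzero Christoffel symbols Gamma^x_xx = f_x / f and Gamma^y_yy = f_y / f: evaluating
  the defining properties on the coordinate fields forces these values, and conversely they
  satisfy them. On each coordinate of a vector field this connection therefore acts as a
  connection on a trivial line bundle with connection form (f_x / f) dx, resp. (f_y / f) dy,
  whose curvature is the exterior derivative of that form, namely -(f_x / f)_y dx \<and> dy,
  resp. (f_y / f)_x dx \<and> dy. By the symmetry of mixed partials both vanish exactly when
  f_xy f = f_x f_y. The symmetry of mixed partials and the holomorphy of the partial
  derivatives of a holomorphic function of two variables come from the Cauchy integral
  formula on a polydisc.
*)

theory Submission
  imports Defs "HOL-Complex_Analysis.Complex_Analysis"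
begin

section \<open>Partial derivatives\<close>

definition coord_line :: "nat \<Rightarrow> pt \<Rightarrow> complex \<Rightarrow> pt" where
  "coord_line i p t = (if i = 0 then (t, snd p) else (fst p, t))"

lemma coord_line_comp [simp]: "coord_line i p (comp i p) = p"
  by (simp add: coord_line_def comp_def)

lemma pd_coord_line: "pd i g p = deriv (\<lambda>t. g (coord_line i p t)) (comp i p)"
  by (simp add: pd_def coord_line_def comp_def)

lemma has_field_derivative_pd:
  assumes "holo2 U g" and "p \<in> U"
  shows "((\<lambda>t. g (coord_line i p t)) has_field_derivative pd i g p) (at (comp i p))"
proof -
  obtain L where L: "(g has_derivative L) (at p)" and lin: "\<And>c v. L (c * fst v, c * snd v) = c * L v"
    using assms unfolding holo2_def by blast
  define e where "e = coord_line i 0 1"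
  have "(coord_line i p has_derivative (\<lambda>t. (t * fst e, t * snd e))) (at (comp i p))"
    unfolding e_def coord_line_def by (cases "i = 0") (auto intro!: derivative_eq_intros)
  moreover have "(g has_derivative L) (at (coord_line i p (comp i p)))"
    using L by simp
  ultimately have "((\<lambda>t. g (coord_line i p t)) has_derivative (\<lambda>t. L (t * fst e, t * snd e)))
      (at (comp i p))"
    by (rule has_derivative_compose)
  moreover have "(\<lambda>t. L (t * fst e, t * snd e)) = (*) (L e)"
    by (simp add: lin fun_eq_iff mult.commute)
  ultimately have "((\<lambda>t. g (coord_line i p t)) has_field_derivative L e) (at (comp i p))"
    by (simp add: has_field_derivative_def)
  then show ?thesis
    by (simp add: pd_coord_line DERIV_imp_deriv)
qed

lemma holo2_holomorphic_on_slices: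
  assumes "holo2 U g"
  shows "{x} \<times> S \<subseteq> U \<Longrightarrow> (\<lambda>y. g (x, y)) holomorphic_on S"
    and "S \<times> {y} \<subseteq> U \<Longrightarrow> (\<lambda>x. g (x, y)) holomorphic_on S"
proof -
  show "(\<lambda>y. g (x, y)) holomorphic_on S" if "{x} \<times> S \<subseteq> U"
    unfolding holomorphic_on_def field_differentiable_def
  proof
    fix z assume "z \<in> S"
    with that have "((\<lambda>y. g (x, y)) has_field_derivative pd 1 g (x, z)) (at z)"
      using has_field_derivative_pd[OF assms, of "(x, z)" 1] by (auto simp: coord_line_def comp_def)
    then show "\<exists>D. ((\<lambda>y. g (x, y)) has_field_derivative D) (at z within S)"
      by (blast intro: has_field_derivative_at_within)
  qed
  show "(\<lambda>x. g (x, y)) holomorphic_on S" if "S \<times> {y} \<subseteq> U"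
    unfolding holomorphic_on_def field_differentiable_def
  proof
    fix z assume "z \<in> S"
    with that have "((\<lambda>x. g (x, y)) has_field_derivative pd 0 g (z, y)) (at z)"
      using has_field_derivative_pd[OF assms, of "(z, y)" 0] by (auto simp: coord_line_def comp_def)
    then show "\<exists>D. ((\<lambda>x. g (x, y)) has_field_derivative D) (at z within S)"
      by (blast intro: has_field_derivative_at_within)
  qed
qed

lemma holo2_imp_continuous_on: "holo2 U g \<Longrightarrow> continuous_on U g"
  unfolding holo2_def
  by (intro continuous_at_imp_continuous_on ballI) (blast dest: has_derivative_continuous)

lemma pd_cong_open:
  assumes "open V" and "p \<in> V" and "\<And>q. q \<in> V \<Longrightarrow> g q = h q"
  shows "pd i g p = pd i h p"
  unfolding pd_coord_line
proof (rule deriv_cong_ev[OF _ refl])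
  have "open (coord_line i p -` V)"
    by (rule open_vimage[OF assms(1)]) (cases "i = 0"; auto simp: coord_line_def intro!: continuous_intros)
  moreover have "comp i p \<in> coord_line i p -` V"
    using assms(2) by simp
  ultimately show "\<forall>\<^sub>F t in nhds (comp i p). g (coord_line i p t) = h (coord_line i p t)"
    unfolding eventually_nhds using assms(3) by blast
qed

lemma pd_const [simp]: "pd i (\<lambda>q. c) p = 0"
  by (simp add: pd_coord_line)

lemma pd_add:
  assumes "holo2 U g" and "holo2 U h" and "p \<in> U"
  shows "pd i (\<lambda>q. g q + h q) p = pd i g p + pd i h p"
  unfolding pd_coord_line[of i "\<lambda>q. g q + h q"]
  using assms by (intro DERIV_imp_deriv DERIV_add has_field_derivative_pd)

lemma pd_diff:
  assumes "holo2 U g" and "holo2 U h" and "p \<in> U"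
  shows "pd i (\<lambda>q. g q - h q) p = pd i g p - pd i h p"
  unfolding pd_coord_line[of i "\<lambda>q. g q - h q"]
  using assms by (intro DERIV_imp_deriv DERIV_diff has_field_derivative_pd)

lemma pd_mult:
  assumes "holo2 U g" and "holo2 U h" and "p \<in> U"
  shows "pd i (\<lambda>q. g q * h q) p = pd i g p * h p + g p * pd i h p"
  unfolding pd_coord_line[of i "\<lambda>q. g q * h q"]
  using DERIV_mult'[OF has_field_derivative_pd[OF assms(1,3)] has_field_derivative_pd[OF assms(2,3)]]
  by (intro DERIV_imp_deriv) (simp add: algebra_simps)

lemma pd_divide:
  assumes "holo2 U g" and "holo2 U h" and "p \<in> U" and "h p \<noteq> 0"
  shows "pd i (\<lambda>q. g q / h q) p = (pd i g p * h p - g p * pd i h p) / (h p)\<^sup>2"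
  unfolding pd_coord_line[of i "\<lambda>q. g q / h q"]
  using DERIV_divide[OF has_field_derivative_pd[OF assms(1,3)] has_field_derivative_pd[OF assms(2,3)]] assms(4)
  by (intro DERIV_imp_deriv) (simp add: power2_eq_square)

lemma holo2_const [simp]: "holo2 U (\<lambda>q. c)"
  unfolding holo2_def by (auto intro!: exI[of _ "\<lambda>v. 0"])

lemma holo2_combine:
  assumes "holo2 U g" and "holo2 U h"
    and "\<And>p Lg Lh. p \<in> U \<Longrightarrow> (g has_derivative Lg) (at p) \<Longrightarrow> (h has_derivative Lh) (at p) \<Longrightarrow>
           ((\<lambda>q. F (g q) (h q)) has_derivative (\<lambda>v. Dg p * Lg v + Dh p * Lh v)) (at p)"
  shows "holo2 U (\<lambda>q. F (g q) (h q))"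
  unfolding holo2_def
proof
  fix p assume p: "p \<in> U"
  with assms(1,2) obtain Lg Lh where
    Lg: "(g has_derivative Lg) (at p)" "\<And>c v. Lg (c * fst v, c * snd v) = c * Lg v" and
    Lh: "(h has_derivative Lh) (at p)" "\<And>c v. Lh (c * fst v, c * snd v) = c * Lh v"
    unfolding holo2_def by meson
  show "\<exists>L. ((\<lambda>q. F (g q) (h q)) has_derivative L) (at p) \<and> (\<forall>c v. L (c * fst v, c * snd v) = c * L v)"
    using assms(3)[OF p Lg(1) Lh(1)]
    by (intro exI[of _ "\<lambda>v. Dg p * Lg v + Dh p * Lh v"]) (simp add: Lg(2) Lh(2) algebra_simps)
qed

lemma holo2_add: "holo2 U g \<Longrightarrow> holo2 U h \<Longrightarrow> holo2 U (\<lambda>q. g q + h q)"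
  by (rule holo2_combine[of _ _ _ "(+)" "\<lambda>_. 1" "\<lambda>_. 1"]) (auto intro!: derivative_eq_intros)

lemma holo2_diff: "holo2 U g \<Longrightarrow> holo2 U h \<Longrightarrow> holo2 U (\<lambda>q. g q - h q)"
  by (rule holo2_combine[of _ _ _ "(-)" "\<lambda>_. 1" "\<lambda>_. -1"]) (auto intro!: derivative_eq_intros)

lemma holo2_mult: "holo2 U g \<Longrightarrow> holo2 U h \<Longrightarrow> holo2 U (\<lambda>q. g q * h q)"
  by (rule holo2_combine[of _ _ _ "(*)" h g]) (auto intro!: derivative_eq_intros simp: algebra_simps)

lemma holo2_divide:
  assumes "holo2 U g" and "holo2 U h" and "\<forall>q\<in>U. h q \<noteq> 0"
  shows "holo2 U (\<lambda>q. g q / h q)"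
  using assms(1,2)
  by (rule holo2_combine[of _ _ _ "(/)" "\<lambda>q. 1 / h q" "\<lambda>q. - g q / (h q)\<^sup>2"])
     (use assms(3) in \<open>auto intro!: derivative_eq_intros simp: field_simps power2_eq_square\<close>)

lemma holo2_cong_open:
  assumes "open V" and "holo2 V h" and "\<And>q. q \<in> V \<Longrightarrow> g q = h q"
  shows "holo2 V g"
  unfolding holo2_def
proof
  fix p assume p: "p \<in> V"
  with assms(2) obtain L where "(h has_derivative L) (at p)" and "\<forall>c v. L (c * fst v, c * snd v) = c * L v"
    unfolding holo2_def by blast
  moreover have "(g has_derivative L) (at p)"
    using has_derivative_transform_within_open[OF \<open>(h has_derivative L) (at p)\<close> assms(1) p] assms(3)
    by simp
  ultimately show "\<exists>L. (g has_derivative L) (at p) \<and> (\<forall>c v. L (c * fst v, c * snd v) = c * L v)"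
    by blast
qed

lemma pd_nonzero_index: "i \<noteq> 0 \<Longrightarrow> pd i g = pd 1 g"
  by (simp add: pd_def fun_eq_iff)

section \<open>Cauchy integral formula on a polydisc\<close>

lemma continuous_on_contour_integral_circlepath:
  fixes F :: "'a::metric_space \<Rightarrow> complex \<Rightarrow> complex"
  assumes cont: "continuous_on (K \<times> sphere c r) (\<lambda>x. F (fst x) (snd x))" and r: "0 < r"
  shows "continuous_on K (\<lambda>q. contour_integral (circlepath c r) (F q))"
  unfolding continuous_on_def
proof
  fix q0 assume q0: "q0 \<in> K"
  show "((\<lambda>q. contour_integral (circlepath c r) (F q)) \<longlongrightarrow> contour_integral (circlepath c r) (F q0))
          (at q0 within K)"
  proof (cases "trivial_limit (at q0 within K)")
    case False
    have "F q contour_integrable_on circlepath c r" if "q \<in> K" for q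
    proof (rule contour_integrable_continuous_circlepath)
      have "continuous_on (sphere c r) (\<lambda>w. (\<lambda>x. F (fst x) (snd x)) (q, w))"
        by (rule continuous_on_compose2[OF cont]) (auto intro!: continuous_intros simp: that)
      then show "continuous_on (path_image (circlepath c r)) (F q)"
        using r by simp
    qed
    then have "\<forall>\<^sub>F q in at q0 within K. F q contour_integrable_on circlepath c r"
      by (auto simp: eventually_at_filter intro!: always_eventually)
    moreover have "uniform_limit (sphere c r) F (F q0) (at q0 within K)"
      unfolding uniform_limit_iff
    proof (intro allI impI)
      fix e :: real assume e: "0 < e"
      obtain V where V: "q0 \<in> V" "open V"
        "\<forall>q\<in>V \<inter> K. \<forall>w\<in>sphere c r. dist (F q w) (F q0 w) \<le> e / 2"
        using continuous_on_prod_compactE[OF cont compact_sphere q0, of "e / 2"] e by auto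
      then have "\<forall>\<^sub>F q in nhds q0. q \<in> V"
        using eventually_nhds by blast
      then show "\<forall>\<^sub>F q in at q0 within K. \<forall>w\<in>sphere c r. dist (F q w) (F q0 w) < e"
        unfolding eventually_at_filter
      proof (rule eventually_mono, intro impI ballI)
        fix q w assume "q \<in> V" "q \<in> K" "w \<in> sphere c r"
        then have "dist (F q w) (F q0 w) \<le> e / 2"
          using V(3) by blast
        then show "dist (F q w) (F q0 w) < e"
          using e by linarith
      qed
    qed
    ultimately show ?thesis
      by (rule contour_integral_uniform_limit_circlepath(2)[OF _ _ False r])
  qed simp
qed

definition partial_cauchy_integral ::
    "(pt \<Rightarrow> complex) \<Rightarrow> complex \<Rightarrow> real \<Rightarrow> nat \<Rightarrow> complex \<Rightarrow> complex \<Rightarrow> complex" where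
  "partial_cauchy_integral g b R n u y = contour_integral (circlepath b R) (\<lambda>w. g (u, w) / (w - y) ^ n)"

text \<open>For \<open>m = n = 1\<close> this reproduces \<open>g\<close> on the open polydisc, and differentiating under
  the integral only raises \<open>m\<close> or \<open>n\<close>; so every partial derivative of \<open>g\<close> is again such an
  integral.\<close>
definition double_cauchy_integral ::
    "(pt \<Rightarrow> complex) \<Rightarrow> complex \<Rightarrow> complex \<Rightarrow> real \<Rightarrow> nat \<Rightarrow> nat \<Rightarrow> complex \<Rightarrow> complex \<Rightarrow> complex" where
  "double_cauchy_integral g a b R m n x y =
     contour_integral (circlepath a R) (\<lambda>u. partial_cauchy_integral g b R n u y / (u - x) ^ m)
       / (2 * of_real pi * \<i>)\<^sup>2"

context
  fixes g :: "pt \<Rightarrow> complex" and a b :: complex and R :: real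
  assumes g_cont: "continuous_on (cball a R \<times> cball b R) g" and R_pos: "0 < R"
begin

lemma continuous_on_slices:
  shows "u \<in> cball a R \<Longrightarrow> continuous_on (cball b R) (\<lambda>w. g (u, w))"
    and "w \<in> cball b R \<Longrightarrow> continuous_on (cball a R) (\<lambda>u. g (u, w))"
  by (auto intro!: continuous_on_compose2[OF g_cont] continuous_intros)

lemma continuous_on_partial_cauchy_integral:
  "continuous_on (sphere a R \<times> ball b R) (\<lambda>q. partial_cauchy_integral g b R n (fst q) (snd q))"
proof -
  have "continuous_on ((sphere a R \<times> ball b R) \<times> sphere b R)
          (\<lambda>x. g (fst (fst x), snd x) / (snd x - snd (fst x)) ^ n)"
    by (intro continuous_intros continuous_on_compose2[OF g_cont]) (auto simp: dist_commute)
  then show ?thesis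
    unfolding partial_cauchy_integral_def
    by (intro continuous_on_contour_integral_circlepath[OF _ R_pos,
          where F = "\<lambda>q w. g (fst q, w) / (w - snd q) ^ n"]) simp
qed

lemma continuous_on_double_cauchy_integral:
  "continuous_on (ball a R \<times> ball b R) (\<lambda>q. double_cauchy_integral g a b R m n (fst q) (snd q))"
proof -
  have "continuous_on ((ball a R \<times> ball b R) \<times> sphere a R)
          (\<lambda>x. partial_cauchy_integral g b R n (snd x) (snd (fst x)))"
    by (rule continuous_on_compose2[OF continuous_on_partial_cauchy_integral,
          of _ "\<lambda>x. (snd x, snd (fst x))", simplified]) (auto intro!: continuous_intros)
  then have "continuous_on ((ball a R \<times> ball b R) \<times> sphere a R)
          (\<lambda>x. partial_cauchy_integral g b R n (snd x) (snd (fst x)) / (snd x - fst (fst x)) ^ m)"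
    by (intro continuous_intros) (auto simp: dist_commute)
  then show ?thesis
    unfolding double_cauchy_integral_def
    by (intro continuous_on_divide[OF continuous_on_contour_integral_circlepath[OF _ R_pos,
          where F = "\<lambda>q u. partial_cauchy_integral g b R n u (snd q) / (u - fst q) ^ m"]]
          continuous_on_const) simp_all
qed

lemma double_cauchy_integral_has_field_derivative_fst:
  assumes x: "x \<in> ball a R" and y: "y \<in> ball b R" and m: "m \<noteq> 0"
  shows "((\<lambda>x. double_cauchy_integral g a b R m n x y) has_field_derivative
           of_nat m * double_cauchy_integral g a b R (Suc m) n x y) (at x)"
proof -
  let ?F = "\<lambda>u. partial_cauchy_integral g b R n u y"
  have F_cont: "continuous_on (path_image (circlepath a R)) ?F"
    using continuous_on_compose2[OF continuous_on_partial_cauchy_integral, of _ "\<lambda>u. (u, y)"] y R_pos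
    by (simp add: continuous_intros subset_eq)
  have "((\<lambda>u. ?F u / (u - w) ^ m) has_contour_integral
          contour_integral (circlepath a R) (\<lambda>u. ?F u / (u - w) ^ m)) (circlepath a R)"
    if "w \<in> ball a R" for w
    using that R_pos
    by (intro has_contour_integral_integral contour_integrable_continuous_circlepath continuous_intros F_cont)
       (auto simp: dist_commute)
  from DERIV_cdivide[OF Cauchy_next_derivative_circlepath(2)[OF F_cont this m x]]
  show ?thesis
    by (simp add: double_cauchy_integral_def)
qed

lemma double_cauchy_integral_swap:
  assumes x: "x \<in> ball a R" and y: "y \<in> ball b R"
  shows "double_cauchy_integral g a b R m n x y = double_cauchy_integral (\<lambda>q. g (snd q, fst q)) b a R n m y x"
proof -
  define F where "F = (\<lambda>u w. g (u, w) / (w - y) ^ n / (u - x) ^ m)"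
  have "contour_integral (circlepath a R) (\<lambda>u. partial_cauchy_integral g b R n u y / (u - x) ^ m)
      = contour_integral (circlepath a R) (\<lambda>u. contour_integral (circlepath b R) (F u))"
  proof (rule contour_integral_eq)
    fix u assume "u \<in> path_image (circlepath a R)"
    then have "continuous_on (path_image (circlepath b R)) (\<lambda>w. g (u, w) / (w - y) ^ n)"
      using y R_pos by (intro continuous_intros continuous_on_subset[OF continuous_on_slices(1)])
        (auto simp: dist_commute)
    then show "partial_cauchy_integral g b R n u y / (u - x) ^ m = contour_integral (circlepath b R) (F u)"
      unfolding F_def partial_cauchy_integral_def
      by (intro contour_integral_div[symmetric] contour_integrable_continuous_circlepath)
  qed
  also have "\<dots> = contour_integral (circlepath b R) (\<lambda>w. contour_integral (circlepath a R) (\<lambda>u. F u w))"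
  proof (rule contour_integral_swap)
    show "continuous_on (path_image (circlepath a R) \<times> path_image (circlepath b R)) (\<lambda>(u, w). F u w)"
      using x y R_pos unfolding F_def case_prod_beta
      by (intro continuous_intros continuous_on_compose2[OF g_cont]) (auto simp: dist_commute)
  qed (auto simp: vector_derivative_circlepath intro!: continuous_intros)
  also have "\<dots> = contour_integral (circlepath b R)
                    (\<lambda>w. partial_cauchy_integral (\<lambda>q. g (snd q, fst q)) a R m w x / (w - y) ^ n)"
  proof (rule contour_integral_eq)
    fix w assume "w \<in> path_image (circlepath b R)"
    then have "continuous_on (path_image (circlepath a R)) (\<lambda>u. g (u, w) / (u - x) ^ m)"
      using x R_pos by (intro continuous_intros continuous_on_subset[OF continuous_on_slices(2)])
        (auto simp: dist_commute)
    then have "contour_integral (circlepath a R) (\<lambda>u. g (u, w) / (u - x) ^ m / (w - y) ^ n)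
             = contour_integral (circlepath a R) (\<lambda>u. g (u, w) / (u - x) ^ m) / (w - y) ^ n"
      by (intro contour_integral_div contour_integrable_continuous_circlepath)
    then show "contour_integral (circlepath a R) (\<lambda>u. F u w)
             = partial_cauchy_integral (\<lambda>q. g (snd q, fst q)) a R m w x / (w - y) ^ n"
      by (simp add: F_def partial_cauchy_integral_def divide_divide_eq_left mult.commute)
  qed
  finally show ?thesis
    by (simp add: double_cauchy_integral_def)
qed

end

lemma double_cauchy_integral_has_field_derivative_snd:
  assumes g_cont: "continuous_on (cball a R \<times> cball b R) g" and R: "0 < R"
    and x: "x \<in> ball a R" and y: "y \<in> ball b R" and n: "n \<noteq> 0"
  shows "((\<lambda>y. double_cauchy_integral g a b R m n x y) has_field_derivative
           of_nat n * double_cauchy_integral g a b R m (Suc n) x y) (at y)"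
proof -
  have g_swap_cont: "continuous_on (cball b R \<times> cball a R) (\<lambda>q. g (snd q, fst q))"
    by (rule continuous_on_compose2[OF g_cont]) (auto intro!: continuous_intros)
  note swap = double_cauchy_integral_swap[OF g_cont R x]
  from double_cauchy_integral_has_field_derivative_fst[OF g_swap_cont R y x n, of m]
  show ?thesis
    unfolding swap[OF y] by (rule has_field_derivative_transform_within_open[OF _ open_ball y]) (simp add: swap)
qed

lemma double_cauchy_integral_has_derivative:
  assumes g_cont: "continuous_on (cball a R \<times> cball b R) g" and R: "0 < R"
    and x: "x \<in> ball a R" and y: "y \<in> ball b R" and m: "m \<noteq> 0" and n: "n \<noteq> 0"
  shows "((\<lambda>q. double_cauchy_integral g a b R m n (fst q) (snd q)) has_derivative
           (\<lambda>v. of_nat m * double_cauchy_integral g a b R (Suc m) n x y * fst v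
              + of_nat n * double_cauchy_integral g a b R m (Suc n) x y * snd v)) (at (x, y))"
proof -
  let ?\<Phi> = "double_cauchy_integral g a b R"
  have dx: "((\<lambda>x. ?\<Phi> m n x y) has_derivative (*) (of_nat m * ?\<Phi> (Suc m) n x y)) (at x within ball a R)"
    using double_cauchy_integral_has_field_derivative_fst[OF g_cont R x y m]
    by (simp add: has_field_derivative_imp_has_derivative has_field_derivative_at_within)
  have dy: "((\<lambda>y. ?\<Phi> m n x y) has_derivative blinfun_apply (blinfun_mult_right (of_nat n * ?\<Phi> m (Suc n) x y)))
              (at y within ball b R)" if "x \<in> ball a R" "y \<in> ball b R" for x y
    using double_cauchy_integral_has_field_derivative_snd[OF g_cont R that n]
    by (simp add: has_field_derivative_imp_has_derivative has_field_derivative_at_within)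
  have "continuous (at (x, y) within ball a R \<times> ball b R) (\<lambda>q. ?\<Phi> m (Suc n) (fst q) (snd q))"
    using continuous_on_double_cauchy_integral[OF g_cont R] x y
    by (simp add: continuous_on_eq_continuous_within)
  then have "continuous (at (x, y) within ball a R \<times> ball b R)
      (\<lambda>(x, y). blinfun_mult_right (of_nat n * ?\<Phi> m (Suc n) x y))"
    unfolding continuous_within case_prod_beta
    by (intro bounded_linear.tendsto[OF bounded_linear_blinfun_mult_right] tendsto_mult tendsto_const)
  from has_derivative_partialsI[OF dx dy this y convex_ball]
  have "((\<lambda>(x, y). ?\<Phi> m n x y) has_derivative
          (\<lambda>(tx, ty). of_nat m * ?\<Phi> (Suc m) n x y * tx + of_nat n * ?\<Phi> m (Suc n) x y * ty))
          (at (x, y) within ball a R \<times> ball b R)"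
    by simp
  moreover have "at (x, y) within ball a R \<times> ball b R = at (x, y)"
    using x y by (intro at_within_open) (auto intro: open_Times)
  ultimately show ?thesis
    unfolding case_prod_beta by simp
qed

lemma holo2_double_cauchy_integral:
  assumes "continuous_on (cball a R \<times> cball b R) g" and "0 < R" and "m \<noteq> 0" and "n \<noteq> 0"
  shows "holo2 (ball a R \<times> ball b R) (\<lambda>q. double_cauchy_integral g a b R m n (fst q) (snd q))"
  unfolding holo2_def
proof
  fix p assume "p \<in> ball a R \<times> ball b R"
  then have "fst p \<in> ball a R" and "snd p \<in> ball b R"
    by auto
  from double_cauchy_integral_has_derivative[OF assms(1,2) this assms(3,4)]
  show "\<exists>L. ((\<lambda>q. double_cauchy_integral g a b R m n (fst q) (snd q)) has_derivative L) (at p)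
                \<and> (\<forall>c v. L (c * fst v, c * snd v) = c * L v)"
    by (intro exI[of _ "\<lambda>v. of_nat m * double_cauchy_integral g a b R (Suc m) n (fst p) (snd p) * fst v
                          + of_nat n * double_cauchy_integral g a b R m (Suc n) (fst p) (snd p) * snd v"])
       (simp add: algebra_simps)
qed

lemma pd_double_cauchy_integral:
  assumes "continuous_on (cball a R \<times> cball b R) g" and "0 < R" and "m \<noteq> 0" and "n \<noteq> 0"
    and "q \<in> ball a R \<times> ball b R"
  shows "pd 0 (\<lambda>q. double_cauchy_integral g a b R m n (fst q) (snd q)) q
           = of_nat m * double_cauchy_integral g a b R (Suc m) n (fst q) (snd q)"
    and "pd 1 (\<lambda>q. double_cauchy_integral g a b R m n (fst q) (snd q)) q
           = of_nat n * double_cauchy_integral g a b R m (Suc n) (fst q) (snd q)"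
  using double_cauchy_integral_has_field_derivative_fst[OF assms(1,2) _ _ assms(3), of "fst q" "snd q"]
    double_cauchy_integral_has_field_derivative_snd[OF assms(1,2) _ _ assms(4), of "fst q" "snd q"] assms(5)
  by (auto simp: pd_def DERIV_imp_deriv)

lemma double_cauchy_integral_formula:
  assumes h: "holo2 U g" and sub: "cball a R \<times> cball b R \<subseteq> U"
    and x: "x \<in> ball a R" and y: "y \<in> ball b R"
  shows "double_cauchy_integral g a b R 1 1 x y = g (x, y)"
proof -
  have R: "0 < R"
    using le_less_trans[OF zero_le_dist x[unfolded mem_ball]] .
  have g_cont: "continuous_on (cball a R \<times> cball b R) g"
    using continuous_on_subset[OF holo2_imp_continuous_on[OF h] sub] .
  have inner: "partial_cauchy_integral g b R 1 u y = 2 * of_real pi * \<i> * g (u, y)" if u: "u \<in> cball a R" for u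
  proof -
    have "((\<lambda>w. g (u, w) / (w - y)) has_contour_integral (2 * of_real pi * \<i> * g (u, y))) (circlepath b R)"
    proof (rule Cauchy_integral_circlepath)
      show "continuous_on (cball b R) (\<lambda>w. g (u, w))"
        using continuous_on_slices(1)[OF g_cont R u] .
      show "(\<lambda>w. g (u, w)) holomorphic_on ball b R"
        using u sub by (intro holo2_holomorphic_on_slices(1)[OF h]) auto
      show "norm (y - b) < R"
        using y by (simp add: dist_norm norm_minus_commute)
    qed
    then show ?thesis
      unfolding partial_cauchy_integral_def by (simp add: contour_integral_unique)
  qed
  have "((\<lambda>u. g (u, y) / (u - x)) has_contour_integral (2 * of_real pi * \<i> * g (x, y))) (circlepath a R)"
  proof (rule Cauchy_integral_circlepath)
    show "continuous_on (cball a R) (\<lambda>u. g (u, y))"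
      using continuous_on_slices(2)[OF g_cont R] y by simp
    show "(\<lambda>u. g (u, y)) holomorphic_on ball a R"
      using y sub by (intro holo2_holomorphic_on_slices(2)[OF h]) auto
    show "norm (x - a) < R"
      using x by (simp add: dist_norm norm_minus_commute)
  qed
  then have "((\<lambda>u. 2 * of_real pi * \<i> * (g (u, y) / (u - x))) has_contour_integral
               2 * of_real pi * \<i> * (2 * of_real pi * \<i> * g (x, y))) (circlepath a R)"
    by (rule has_contour_integral_lmul)
  then have "((\<lambda>u. partial_cauchy_integral g b R 1 u y / (u - x) ^ 1) has_contour_integral
               2 * of_real pi * \<i> * (2 * of_real pi * \<i> * g (x, y))) (circlepath a R)"
  proof (rule has_contour_integral_eq)
    fix u assume "u \<in> path_image (circlepath a R)"
    then have u: "u \<in> cball a R"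
      using R by simp
    show "2 * of_real pi * \<i> * (g (u, y) / (u - x)) = partial_cauchy_integral g b R 1 u y / (u - x) ^ 1"
      using inner[OF u] by simp
  qed
  then show ?thesis
    unfolding double_cauchy_integral_def by (simp add: contour_integral_unique power2_eq_square)
qed

lemma open_contains_polydisc:
  assumes "open U" and "p \<in> U"
  obtains R where "0 < R" and "cball (fst p) R \<times> cball (snd p) R \<subseteq> U"
proof -
  obtain A B where AB: "open A" "open B" "p \<in> A \<times> B" "A \<times> B \<subseteq> U"
    using open_prod_elim[OF assms] by blast
  then obtain r s where "0 < r" "cball (fst p) r \<subseteq> A" "0 < s" "cball (snd p) s \<subseteq> B"
    by (metis mem_Times_iff open_contains_cball)
  then have "cball (fst p) (min r s) \<subseteq> A" and "cball (snd p) (min r s) \<subseteq> B"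
    using subset_cball[of "min r s" r "fst p"] subset_cball[of "min r s" s "snd p"] by auto
  then have "cball (fst p) (min r s) \<times> cball (snd p) (min r s) \<subseteq> U"
    using AB(4) by blast
  with \<open>0 < r\<close> \<open>0 < s\<close> show ?thesis
    using that[of "min r s"] by simp
qed

lemma pd_eq_double_cauchy_integral:
  assumes h: "holo2 U g" and sub: "cball a R \<times> cball b R \<subseteq> U" and q: "q \<in> ball a R \<times> ball b R"
  shows "pd 0 g q = double_cauchy_integral g a b R 2 1 (fst q) (snd q)"
    and "pd 1 g q = double_cauchy_integral g a b R 1 2 (fst q) (snd q)"
proof -
  have R: "0 < R"
    using q le_less_trans[OF zero_le_dist, of a "fst q" R] by auto
  have g_cont: "continuous_on (cball a R \<times> cball b R) g"
    using continuous_on_subset[OF holo2_imp_continuous_on[OF h] sub] .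
  have "g q' = double_cauchy_integral g a b R 1 1 (fst q') (snd q')" if "q' \<in> ball a R \<times> ball b R" for q'
    using double_cauchy_integral_formula[OF h sub, of "fst q'" "snd q'"] that by (simp add: mem_Times_iff)
  then have "pd i g q = pd i (\<lambda>q. double_cauchy_integral g a b R 1 1 (fst q) (snd q)) q" for i
    by (rule pd_cong_open[OF open_Times[OF open_ball open_ball] q])
  then show "pd 0 g q = double_cauchy_integral g a b R 2 1 (fst q) (snd q)"
    and "pd 1 g q = double_cauchy_integral g a b R 1 2 (fst q) (snd q)"
    using pd_double_cauchy_integral[OF g_cont R _ _ q, of 1 1] by (simp_all add: numeral_2_eq_2)
qed

lemma holo2_pd:
  assumes U: "open U" and h: "holo2 U g"
  shows "holo2 U (pd i g)"
  unfolding holo2_def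
proof
  fix p assume p: "p \<in> U"
  obtain R where R: "0 < R" and sub: "cball (fst p) R \<times> cball (snd p) R \<subseteq> U"
    using open_contains_polydisc[OF U p] by blast
  let ?V = "ball (fst p) R \<times> ball (snd p) R"
  define m n where "m = (if i = 0 then 2 else 1 :: nat)" and "n = (if i = 0 then 1 else 2 :: nat)"
  have "continuous_on (cball (fst p) R \<times> cball (snd p) R) g"
    using continuous_on_subset[OF holo2_imp_continuous_on[OF h] sub] .
  then have "holo2 ?V (\<lambda>q. double_cauchy_integral g (fst p) (snd p) R m n (fst q) (snd q))"
    by (rule holo2_double_cauchy_integral[OF _ R]) (simp_all add: m_def n_def)
  moreover have "pd i g q = double_cauchy_integral g (fst p) (snd p) R m n (fst q) (snd q)" if "q \<in> ?V" for q
    using pd_eq_double_cauchy_integral[OF h sub that] pd_nonzero_index[of i g]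
    by (cases "i = 0") (simp_all add: m_def n_def)
  ultimately have "holo2 ?V (pd i g)"
    by (rule holo2_cong_open[OF open_Times[OF open_ball open_ball]])
  moreover have "p \<in> ?V"
    using R by (cases p) simp
  ultimately show "\<exists>L. (pd i g has_derivative L) (at p) \<and> (\<forall>c v. L (c * fst v, c * snd v) = c * L v)"
    unfolding holo2_def by blast
qed

lemma pd_commute:
  assumes U: "open U" and h: "holo2 U g" and p: "p \<in> U"
  shows "pd 0 (pd 1 g) p = pd 1 (pd 0 g) p"
proof -
  obtain R where R: "0 < R" and sub: "cball (fst p) R \<times> cball (snd p) R \<subseteq> U"
    using open_contains_polydisc[OF U p] by blast
  let ?V = "ball (fst p) R \<times> ball (snd p) R"
  let ?\<Phi> = "\<lambda>m n q. double_cauchy_integral g (fst p) (snd p) R m n (fst q) (snd q)"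
  have V: "open ?V" "p \<in> ?V"
    using R by (auto intro: open_Times simp: mem_Times_iff)
  have g_cont: "continuous_on (cball (fst p) R \<times> cball (snd p) R) g"
    using continuous_on_subset[OF holo2_imp_continuous_on[OF h] sub] .
  note pd_\<Phi> = pd_double_cauchy_integral[OF g_cont R _ _ V(2)]
  have "pd 0 (pd 1 g) p = pd 0 (?\<Phi> 1 2) p"
    by (rule pd_cong_open[OF V]) (rule pd_eq_double_cauchy_integral(2)[OF h sub])
  also have "\<dots> = ?\<Phi> 2 2 p"
    using pd_\<Phi>(1)[of 1 2] by (simp add: numeral_2_eq_2)
  also have "\<dots> = pd 1 (?\<Phi> 2 1) p"
    using pd_\<Phi>(2)[of 2 1] by (simp add: numeral_2_eq_2)
  also have "\<dots> = pd 1 (pd 0 g) p"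
    by (rule pd_cong_open[OF V]) (rule pd_eq_double_cauchy_integral(1)[OF h sub, symmetric])
  finally show ?thesis .
qed

section \<open>Derivatives along vector fields\<close>

lemma vd_expand: "vd X g = (\<lambda>p. fst (X p) * pd 0 g p + snd (X p) * pd 1 g p)"
  by (simp add: fun_eq_iff vd_def comp_def numeral_2_eq_2)

lemma vd_const [simp]: "vd X (\<lambda>q. c) p = 0"
  by (simp add: vd_expand)

lemma vd_add:
  assumes "holo2 U g" and "holo2 U h" and "p \<in> U"
  shows "vd X (\<lambda>q. g q + h q) p = vd X g p + vd X h p"
  by (simp add: vd_expand pd_add[OF assms] algebra_simps)

lemma vd_diff:
  assumes "holo2 U g" and "holo2 U h" and "p \<in> U"
  shows "vd X (\<lambda>q. g q - h q) p = vd X g p - vd X h p"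
  by (simp add: vd_expand pd_diff[OF assms] algebra_simps)

lemma vd_mult:
  assumes "holo2 U g" and "holo2 U h" and "p \<in> U"
  shows "vd X (\<lambda>q. g q * h q) p = vd X g p * h p + g p * vd X h p"
  by (simp add: vd_expand pd_mult[OF assms] algebra_simps)

lemma holo2_vd:
  assumes "open U" and "hvf U X" and "holo2 U g"
  shows "holo2 U (vd X g)"
  using assms unfolding vd_expand hvf_def by (intro holo2_add holo2_mult holo2_pd) auto

lemma vd_vd:
  assumes "open U" and "hvf U Y" and "holo2 U g" and "p \<in> U"
  shows "vd X (vd Y g) p = vd X (\<lambda>q. fst (Y q)) p * pd 0 g p + fst (Y p) * vd X (pd 0 g) p
                         + vd X (\<lambda>q. snd (Y q)) p * pd 1 g p + snd (Y p) * vd X (pd 1 g) p"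
proof -
  note holo = assms(2)[unfolded hvf_def] holo2_pd[OF assms(1,3)]
  have "vd X (vd Y g) p = vd X (\<lambda>q. fst (Y q) * pd 0 g q + snd (Y q) * pd 1 g q) p"
    by (simp add: vd_expand[of Y])
  also have "\<dots> = vd X (\<lambda>q. fst (Y q) * pd 0 g q) p + vd X (\<lambda>q. snd (Y q) * pd 1 g q) p"
    using holo by (intro vd_add[OF _ _ assms(4)] holo2_mult) auto
  finally show ?thesis
    using holo by (simp add: vd_mult[OF _ _ assms(4)])
qed

lemma vd_commutator:
  assumes "open U" and "hvf U X" and "hvf U Y" and "holo2 U g" and "p \<in> U"
  shows "vd X (vd Y g) p - vd Y (vd X g) p = vd (bracket X Y) g p"
  unfolding vd_vd[OF assms(1,3,4,5)] vd_vd[OF assms(1,2,4,5)]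
  using pd_commute[OF assms(1,4,5)]
  by (simp add: vd_expand[of X "pd _ g"] vd_expand[of Y "pd _ g"] vd_expand[of "bracket X Y"]
      bracket_def algebra_simps)

section \<open>Connections on a trivial line bundle\<close>

text \<open>Covariant derivative on the trivial line bundle for the connection form
  \<open>\<alpha> = a0 dx + a1 dy\<close>; the Hess connection of \<open>f dx \<and> dy\<close> acts on each coordinate
  of a vector field in this way.\<close>

definition one_form :: "(pt \<Rightarrow> complex) \<Rightarrow> (pt \<Rightarrow> complex) \<Rightarrow> (pt \<Rightarrow> pt) \<Rightarrow> pt \<Rightarrow> complex" where
  "one_form a0 a1 X q = a0 q * fst (X q) + a1 q * snd (X q)"

definition line_nabla ::
    "(pt \<Rightarrow> complex) \<Rightarrow> (pt \<Rightarrow> complex) \<Rightarrow> (pt \<Rightarrow> pt) \<Rightarrow> (pt \<Rightarrow> complex) \<Rightarrow> pt \<Rightarrow> complex" where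
  "line_nabla a0 a1 X h p = vd X h p + one_form a0 a1 X p * h p"

lemma holo2_one_form:
  assumes "holo2 U a0" and "holo2 U a1" and "hvf U X"
  shows "holo2 U (one_form a0 a1 X)"
  using assms unfolding one_form_def[abs_def] hvf_def by (intro holo2_add holo2_mult) auto

text \<open>Cartan's formula \<open>d\<alpha>(X, Y) = X \<alpha>(Y) - Y \<alpha>(X) - \<alpha>([X, Y])\<close>.\<close>
lemma vd_one_form_antisym:
  assumes "open U" and "holo2 U a0" and "holo2 U a1" and "hvf U X" and "hvf U Y" and "p \<in> U"
  shows "vd X (one_form a0 a1 Y) p - vd Y (one_form a0 a1 X) p - one_form a0 a1 (bracket X Y) p
           = (pd 0 a1 p - pd 1 a0 p) * (fst (X p) * snd (Y p) - snd (X p) * fst (Y p))"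
proof -
  have expand: "vd V (one_form a0 a1 W) p
      = vd V a0 p * fst (W p) + a0 p * vd V (\<lambda>q. fst (W q)) p
        + vd V a1 p * snd (W p) + a1 p * vd V (\<lambda>q. snd (W q)) p" if "hvf U W" for V W
    using that assms(2,3,6) unfolding one_form_def[abs_def] hvf_def
    by (simp add: vd_add[OF holo2_mult holo2_mult] vd_mult)
  show ?thesis
    unfolding expand[OF assms(4)] expand[OF assms(5)]
    by (simp add: vd_expand[of _ a0] vd_expand[of _ a1] one_form_def bracket_def algebra_simps)
qed

lemma line_nabla_curvature:
  assumes "open U" and "holo2 U a0" and "holo2 U a1" and "hvf U X" and "hvf U Y" and "holo2 U h"
    and "p \<in> U"
  shows "line_nabla a0 a1 X (line_nabla a0 a1 Y h) p - line_nabla a0 a1 Y (line_nabla a0 a1 X h) p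
           - line_nabla a0 a1 (bracket X Y) h p
         = (pd 0 a1 p - pd 1 a0 p) * (fst (X p) * snd (Y p) - snd (X p) * fst (Y p)) * h p"
proof -
  have expand: "line_nabla a0 a1 V (line_nabla a0 a1 W h) p
      = vd V (vd W h) p + vd V (one_form a0 a1 W) p * h p + one_form a0 a1 W p * vd V h p
        + one_form a0 a1 V p * (vd W h p + one_form a0 a1 W p * h p)" if "hvf U W" for V W
    using that assms(1-3,6,7)
    by (simp add: line_nabla_def[abs_def] vd_add[OF holo2_vd holo2_mult] holo2_one_form
        vd_mult[OF holo2_one_form[OF assms(2,3) that] assms(6,7)])
  have "line_nabla a0 a1 X (line_nabla a0 a1 Y h) p - line_nabla a0 a1 Y (line_nabla a0 a1 X h) p
           - line_nabla a0 a1 (bracket X Y) h p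
      = (vd X (vd Y h) p - vd Y (vd X h) p - vd (bracket X Y) h p)
        + (vd X (one_form a0 a1 Y) p - vd Y (one_form a0 a1 X) p - one_form a0 a1 (bracket X Y) p) * h p"
    unfolding expand[OF assms(5)] expand[OF assms(4)] by (simp add: line_nabla_def algebra_simps)
  then show ?thesis
    using vd_commutator[OF assms(1,4,5,6,7)] vd_one_form_antisym[OF assms(1-5,7)] by simp
qed

section \<open>The Hess connection\<close>

lemma nabla_expand:
  "nabla G X Y p =
    (vd X (\<lambda>q. fst (Y q)) p + G 0 0 0 p * fst (X p) * fst (Y p) + G 0 0 1 p * fst (X p) * snd (Y p)
       + G 0 1 0 p * snd (X p) * fst (Y p) + G 0 1 1 p * snd (X p) * snd (Y p),
     vd X (\<lambda>q. snd (Y q)) p + G 1 0 0 p * fst (X p) * fst (Y p) + G 1 0 1 p * fst (X p) * snd (Y p)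
       + G 1 1 0 p * snd (X p) * fst (Y p) + G 1 1 1 p * snd (X p) * snd (Y p))"
  by (simp add: nabla_def comp_def numeral_2_eq_2 Let_def algebra_simps)

lemma nabla_cong:
  assumes "open U" and "p \<in> U" and "\<forall>q\<in>U. \<forall>k<2. \<forall>i<2. \<forall>j<2. G k i j q = G' k i j q"
    and "\<And>q. q \<in> U \<Longrightarrow> Y q = Y' q"
  shows "nabla G X Y p = nabla G' X Y' p"
proof -
  have "pd i (\<lambda>q. fst (Y q)) p = pd i (\<lambda>q. fst (Y' q)) p" and "pd i (\<lambda>q. snd (Y q)) p = pd i (\<lambda>q. snd (Y' q)) p"
    for i
    using assms(4) by (auto intro: pd_cong_open[OF assms(1,2)])
  then show ?thesis
    using assms(2-4) by (simp add: nabla_expand vd_expand)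
qed

lemma curv_cong:
  assumes "open U" and "p \<in> U" and "\<forall>q\<in>U. \<forall>k<2. \<forall>i<2. \<forall>j<2. G k i j q = G' k i j q"
  shows "curv G X Y Z p = curv G' X Y Z p"
proof -
  have "nabla G V (nabla G W Z) p = nabla G' V (nabla G' W Z) p" for V W
    using assms by (intro nabla_cong[OF assms]) (auto intro: nabla_cong[OF assms(1) _ assms(3)])
  moreover have "nabla G (bracket X Y) Z p = nabla G' (bracket X Y) Z p"
    by (rule nabla_cong[OF assms]) simp
  ultimately show ?thesis
    by (simp add: curv_def)
qed

lemma flat_conn_cong:
  assumes "open U" and "\<forall>q\<in>U. \<forall>k<2. \<forall>i<2. \<forall>j<2. G k i j q = G' k i j q"
  shows "flat_conn U G \<longleftrightarrow> flat_conn U G'"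
  using curv_cong[OF assms(1) _ assms(2)] by (simp add: flat_conn_def)

definition diag_chr :: "(pt \<Rightarrow> complex) \<Rightarrow> (pt \<Rightarrow> complex) \<Rightarrow> chr" where
  "diag_chr A B k i j =
     (if k = 0 \<and> i = 0 \<and> j = 0 then A else if k = 1 \<and> i = 1 \<and> j = 1 then B else (\<lambda>q. 0))"

lemma nabla_diag_chr:
  "nabla (diag_chr A B) X Y =
     (\<lambda>p. (line_nabla A (\<lambda>q. 0) X (\<lambda>q. fst (Y q)) p, line_nabla (\<lambda>q. 0) B X (\<lambda>q. snd (Y q)) p))"
  by (simp add: fun_eq_iff nabla_expand diag_chr_def line_nabla_def one_form_def)

lemma curv_diag_chr:
  assumes "open U" and "holo2 U A" and "holo2 U B" and "hvf U X" and "hvf U Y" and "hvf U Z"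
    and "p \<in> U"
  shows "curv (diag_chr A B) X Y Z p =
           (- pd 1 A p * (fst (X p) * snd (Y p) - snd (X p) * fst (Y p)) * fst (Z p),
            pd 0 B p * (fst (X p) * snd (Y p) - snd (X p) * fst (Y p)) * snd (Z p))"
  using line_nabla_curvature[OF assms(1,2) holo2_const assms(4,5) _ assms(7), of "\<lambda>q. fst (Z q)"]
    line_nabla_curvature[OF assms(1) holo2_const assms(3-5) _ assms(7), of "\<lambda>q. snd (Z q)"] assms(6)
  by (simp add: curv_def nabla_diag_chr hvf_def)

lemma flat_diag_chr_iff:
  assumes "open U" and "holo2 U A" and "holo2 U B"
  shows "flat_conn U (diag_chr A B) \<longleftrightarrow> (\<forall>p\<in>U. pd 1 A p = 0 \<and> pd 0 B p = 0)"
proof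
  assume flat: "flat_conn U (diag_chr A B)"
  show "\<forall>p\<in>U. pd 1 A p = 0 \<and> pd 0 B p = 0"
  proof
    fix p assume "p \<in> U"
    moreover have "hvf U (\<lambda>q. c)" for c
      by (simp add: hvf_def)
    ultimately have "curv (diag_chr A B) (\<lambda>q. (1, 0)) (\<lambda>q. (0, 1)) (\<lambda>q. (1, 1)) p = 0"
      using flat unfolding flat_conn_def by blast
    with \<open>p \<in> U\<close> show "pd 1 A p = 0 \<and> pd 0 B p = 0"
      by (simp add: curv_diag_chr[OF assms] hvf_def zero_prod_def)
  qed
next
  assume "\<forall>p\<in>U. pd 1 A p = 0 \<and> pd 0 B p = 0"
  then show "flat_conn U (diag_chr A B)"
    by (simp add: flat_conn_def curv_diag_chr[OF assms] zero_prod_def)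
qed

definition hess_chr :: "(pt \<Rightarrow> complex) \<Rightarrow> chr" where
  "hess_chr f = diag_chr (\<lambda>q. pd 0 f q / f q) (\<lambda>q. pd 1 f q / f q)"

lemma holo2_log_pd:
  assumes "open U" and "holo2 U f" and "\<forall>p\<in>U. f p \<noteq> 0"
  shows "holo2 U (\<lambda>q. pd i f q / f q)"
  using assms by (intro holo2_divide holo2_pd)

lemma is_hess_hess_chr:
  assumes U: "open U" and f: "holo2 U f" and nz: "\<forall>p\<in>U. f p \<noteq> 0"
  shows "is_hess U f (hess_chr f)"
  unfolding is_hess_def
proof (intro conjI allI impI ballI)
  fix k i j :: nat
  show "holo2 U (hess_chr f k i j)"
    using holo2_log_pd[OF assms] by (simp add: hess_chr_def diag_chr_def)
next
  fix X Y p
  show "nabla (hess_chr f) X Y p - nabla (hess_chr f) Y X p = bracket X Y p"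
    by (simp add: hess_chr_def nabla_diag_chr line_nabla_def one_form_def bracket_def algebra_simps)
next
  fix X Y Z p assume "hvf U X" and "hvf U Y" and "hvf U Z" and p: "p \<in> U"
  then have holo: "holo2 U (\<lambda>q. fst (Y q))" "holo2 U (\<lambda>q. snd (Y q))"
      "holo2 U (\<lambda>q. fst (Z q))" "holo2 U (\<lambda>q. snd (Z q))"
    by (simp_all add: hvf_def)
  have "vd X (\<lambda>q. omega f q (Y q) (Z q)) p
      = vd X f p * (fst (Y p) * snd (Z p) - snd (Y p) * fst (Z p))
        + f p * (vd X (\<lambda>q. fst (Y q)) p * snd (Z p) + fst (Y p) * vd X (\<lambda>q. snd (Z q)) p
                 - (vd X (\<lambda>q. snd (Y q)) p * fst (Z p) + snd (Y p) * vd X (\<lambda>q. fst (Z q)) p))"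
    unfolding omega_def
    by (simp add: holo f p holo2_mult holo2_diff vd_mult[OF f _ p] vd_diff[OF _ _ p] vd_mult[OF _ _ p])
  also have "\<dots> = omega f p (nabla (hess_chr f) X Y p) (Z p) + omega f p (Y p) (nabla (hess_chr f) X Z p)"
    using nz p
    by (simp add: hess_chr_def nabla_diag_chr line_nabla_def one_form_def omega_def vd_expand[of X f]
        field_simps)
  finally show "vd X (\<lambda>q. omega f q (Y q) (Z q)) p
      = omega f p (nabla (hess_chr f) X Y p) (Z p) + omega f p (Y p) (nabla (hess_chr f) X Z p)" .
next
  fix X Y :: "pt \<Rightarrow> pt" and p assume Y: "\<forall>p\<in>U. fst (Y p) = 0" and p: "p \<in> U"
  then have "pd i (\<lambda>q. fst (Y q)) p = 0" for i
    using pd_cong_open[OF U p, of "\<lambda>q. fst (Y q)" "\<lambda>q. 0"] by simp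
  with Y p show "fst (nabla (hess_chr f) X Y p) = 0"
    by (simp add: hess_chr_def nabla_diag_chr line_nabla_def vd_expand)
next
  fix X Y :: "pt \<Rightarrow> pt" and p assume Y: "\<forall>p\<in>U. snd (Y p) = 0" and p: "p \<in> U"
  then have "pd i (\<lambda>q. snd (Y q)) p = 0" for i
    using pd_cong_open[OF U p, of "\<lambda>q. snd (Y q)" "\<lambda>q. 0"] by simp
  with Y p show "snd (nabla (hess_chr f) X Y p) = 0"
    by (simp add: hess_chr_def nabla_diag_chr line_nabla_def vd_expand)
qed

lemma is_hess_unique:
  assumes H: "is_hess U f G" and p: "p \<in> U" and fp: "f p \<noteq> 0" and "k < 2" and "i < 2" and "j < 2"
  shows "G k i j p = hess_chr f k i j p"
proof -
  define e0 e1 :: "pt \<Rightarrow> pt" where "e0 = (\<lambda>q. (1, 0))" and "e1 = (\<lambda>q. (0, 1))"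
  have fields: "hvf U e0" "hvf U e1"
    by (simp_all add: e0_def e1_def hvf_def)
  note H = H[unfolded is_hess_def]
  have torsion: "nabla G e0 e1 p - nabla G e1 e0 p = bracket e0 e1 p"
    using H fields p by blast
  have parallel: "fst (nabla G e0 e1 p) = 0" "fst (nabla G e1 e1 p) = 0"
      "snd (nabla G e0 e0 p) = 0" "snd (nabla G e1 e0 p) = 0"
    using H fields p by (simp_all add: e0_def e1_def)
  have compatible: "vd e0 (\<lambda>q. omega f q (e0 q) (e1 q)) p
        = omega f p (nabla G e0 e0 p) (e1 p) + omega f p (e0 p) (nabla G e0 e1 p)"
      "vd e1 (\<lambda>q. omega f q (e0 q) (e1 q)) p
        = omega f p (nabla G e1 e0 p) (e1 p) + omega f p (e0 p) (nabla G e1 e1 p)"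
    using H fields p by blast+
  have "G 0 0 1 p = 0" "G 0 1 1 p = 0" "G 1 0 0 p = 0" "G 1 1 0 p = 0"
    using parallel by (simp_all add: nabla_expand e0_def e1_def)
  moreover from this have "G 0 1 0 p = 0" "G 1 0 1 p = 0"
    using torsion by (simp_all add: nabla_expand bracket_def e0_def e1_def prod_eq_iff)
  moreover from this have "G 0 0 0 p = pd 0 f p / f p" "G 1 1 1 p = pd 1 f p / f p"
    using compatible fp by (simp_all add: nabla_expand vd_expand omega_def e0_def e1_def field_simps)
  moreover have "k = 0 \<or> k = 1" "i = 0 \<or> i = 1" "j = 0 \<or> j = 1"
    using \<open>k < 2\<close> \<open>i < 2\<close> \<open>j < 2\<close> by auto
  ultimately show ?thesis
    by (auto simp: hess_chr_def diag_chr_def)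
qed

lemma flat_hess_chr_iff:
  assumes U: "open U" and f: "holo2 U f" and nz: "\<forall>p\<in>U. f p \<noteq> 0"
  shows "flat_conn U (hess_chr f) \<longleftrightarrow> (\<forall>p\<in>U. pd 0 (pd 1 f) p * f p = pd 0 f p * pd 1 f p)"
proof -
  have "pd 1 (\<lambda>q. pd 0 f q / f q) p = 0 \<and> pd 0 (\<lambda>q. pd 1 f q / f q) p = 0
        \<longleftrightarrow> pd 0 (pd 1 f) p * f p = pd 0 f p * pd 1 f p" if p: "p \<in> U" for p
    using nz p pd_commute[OF U f p]
    by (simp add: pd_divide[OF holo2_pd[OF U f] f p] mult.commute)
  then show ?thesis
    unfolding hess_chr_def by (simp add: flat_diag_chr_iff[OF U holo2_log_pd[OF assms] holo2_log_pd[OF assms]])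
qed

theorem corollary4p4:
  fixes U :: "pt set" and f :: "pt \<Rightarrow> complex"
  assumes "open U" and "holo2 U f" and "\<forall>p\<in>U. f p \<noteq> 0"
  shows "(\<exists>G. is_hess U f G) \<and>
         (\<forall>G. is_hess U f G \<longrightarrow>
            (flat_conn U G \<longleftrightarrow>
             (\<forall>p\<in>U. pd 0 (pd 1 f) p * f p = pd 0 f p * pd 1 f p)))"
proof (intro conjI allI impI)
  show "\<exists>G. is_hess U f G"
    using is_hess_hess_chr[OF assms] by blast
next
  fix G assume "is_hess U f G"
  then have "flat_conn U G \<longleftrightarrow> flat_conn U (hess_chr f)"
    using is_hess_unique assms(3) by (intro flat_conn_cong[OF assms(1)]) blast
  also have "\<dots> \<longleftrightarrow> (\<forall>p\<in>U. pd 0 (pd 1 f) p * f p = pd 0 f p * pd 1 f p)"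
    by (rule flat_hess_chr_iff[OF assms])
  finally show "flat_conn U G \<longleftrightarrow> (\<forall>p\<in>U. pd 0 (pd 1 f) p * f p = pd 0 f p * pd 1 f p)" .
qed

end
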